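(* Consider the Friedmann system $\Omega'=-\mu\Omega+\mu\Omega^2$, $H'=-H-\tfrac12\mu\Omega H$, $\mu'=0$ and its line of equilibria $(\Omega,H,\mu)=(1,H,-2)$, at which the Jacobian of $(\Omega',H')$ with respect to $(\Omega,H)$ is $\mathrm{diag}(-2,0)$. Set $\mu_1=\mu+2$. (i) At the equilibrium $(1,0,-2)$ (dispersive Einstein static universe) the local parametric center manifold is $\Omega=1$ and the reduced dynamics is $dH/d\tilde\tau=-\tfrac14\mu_1H$, $\mu_1'=0$, where $\tilde\tau=2\tau$. (ii) At the equilibrium $(1,1,-2)$ (dispersive de Sitter universe) the local parametric center manifold is $\Omega=1$ and the reduced dynamics is $dH/d\tau=-\tfrac12\mu_1 H$, $\mu_1'=0$. In both cases the reduced field $f(H,\mu_1)=c\,\mu_1H$ ($c\ne0$ constant) violates the transversality condition at $(H,\mu_1)=(0,0)$ ($\partial f/\partial\mu_1(0,0)=0$) and the nondegeneracy condition ($\partial^2 f/\partial H^2=0$), so it does not undergo a saddle-node, transcritical or pitchfork bifurcation there.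
   Context: The Friedmann system describes a Robertson–Walker universe with perfect fluid $p=(\gamma-1)\rho$, density parameter $\Omega$, Hubble parameter $H$, dimensionless time $\tau$ ($'=d/d\tau$, $dt/d\tau=1/H$), and $\mu=3\gamma-2$ treated as a parameter. A local parametric center manifold is a locally invariant graph over the center directions (here $H$ and the parameter) tangent to the center eigenspace at the equilibrium. *)

theory Defs
  imports "HOL-Analysis.Analysis"
begin

definition friedmann_Omega :: "real \<Rightarrow> real \<Rightarrow> real \<Rightarrow> real" where
  "friedmann_Omega Om H mu = - mu * Om + mu * Om ^ 2"

definition friedmann_H :: "real \<Rightarrow> real \<Rightarrow> real \<Rightarrow> real" where
  "friedmann_H Om H mu = - H - 1/2 * mu * Om * H"

definition friedmann_mu :: "real \<Rightarrow> real \<Rightarrow> real \<Rightarrow> real" where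
  "friedmann_mu Om H mu = 0"

text \<open>A local parametric center manifold at the equilibrium (Om0, H0, mu0):
  a graph Omega = h(H, mu) over the center directions (H and the parameter mu),
  defined and C1 on an open neighbourhood U of (H0, mu0), passing through the
  equilibrium, locally invariant (the vector field is tangent to the graph on U,
  i.e. the invariance equation holds), and tangent at (H0, mu0) to the center
  eigenspace, which at the equilibria on the line (1, H, -2) is the coordinate
  subspace Omega = 0 (so the tangency condition is Dh(H0,mu0) = 0).\<close>

definition local_param_center_manifold ::
  "(real \<times> real \<Rightarrow> real) \<Rightarrow> real \<Rightarrow> real \<Rightarrow> real \<Rightarrow> bool" where
  "local_param_center_manifold h Om0 H0 mu0 \<longleftrightarrow>
     (\<exists>U. open U \<and> (H0, mu0) \<in> U \<and> h (H0, mu0) = Om0 \<and>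
        (\<forall>p\<in>U. \<exists>D. (h has_derivative D) (at p) \<and>
            friedmann_Omega (h p) (fst p) (snd p) =
              D (friedmann_H (h p) (fst p) (snd p), friedmann_mu (h p) (fst p) (snd p))) \<and>
        continuous_on U (\<lambda>p. frechet_derivative h (at p)) \<and>
        (h has_derivative (\<lambda>_. 0)) (at (H0, mu0)))"

definition d_x :: "(real \<Rightarrow> real \<Rightarrow> real) \<Rightarrow> real \<Rightarrow> real \<Rightarrow> real" where
  "d_x f x m = deriv (\<lambda>y. f y m) x"

definition d_m :: "(real \<Rightarrow> real \<Rightarrow> real) \<Rightarrow> real \<Rightarrow> real \<Rightarrow> real" where
  "d_m f x m = deriv (\<lambda>n. f x n) m"

definition d_xx :: "(real \<Rightarrow> real \<Rightarrow> real) \<Rightarrow> real \<Rightarrow> real \<Rightarrow> real" where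
  "d_xx f x m = deriv (\<lambda>y. d_x f y m) x"

definition d_xm :: "(real \<Rightarrow> real \<Rightarrow> real) \<Rightarrow> real \<Rightarrow> real \<Rightarrow> real" where
  "d_xm f x m = deriv (\<lambda>n. d_x f x n) m"

definition d_xxx :: "(real \<Rightarrow> real \<Rightarrow> real) \<Rightarrow> real \<Rightarrow> real \<Rightarrow> real" where
  "d_xxx f x m = deriv (\<lambda>y. d_xx f y m) x"

text \<open>Sotomayor-type conditions for local bifurcations of x' = f(x, m) at (x0, m0)
  (scalar case, as in Perko, Differential Equations and Dynamical Systems, 4.2).\<close>

definition saddle_node_conditions :: "(real \<Rightarrow> real \<Rightarrow> real) \<Rightarrow> real \<Rightarrow> real \<Rightarrow> bool" where
  "saddle_node_conditions f x0 m0 \<longleftrightarrow>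
     f x0 m0 = 0 \<and> d_x f x0 m0 = 0 \<and> d_m f x0 m0 \<noteq> 0 \<and> d_xx f x0 m0 \<noteq> 0"

definition transcritical_conditions :: "(real \<Rightarrow> real \<Rightarrow> real) \<Rightarrow> real \<Rightarrow> real \<Rightarrow> bool" where
  "transcritical_conditions f x0 m0 \<longleftrightarrow>
     f x0 m0 = 0 \<and> d_x f x0 m0 = 0 \<and> d_m f x0 m0 = 0 \<and> d_xm f x0 m0 \<noteq> 0 \<and> d_xx f x0 m0 \<noteq> 0"

definition pitchfork_conditions :: "(real \<Rightarrow> real \<Rightarrow> real) \<Rightarrow> real \<Rightarrow> real \<Rightarrow> bool" where
  "pitchfork_conditions f x0 m0 \<longleftrightarrow>
     f x0 m0 = 0 \<and> d_x f x0 m0 = 0 \<and> d_m f x0 m0 = 0 \<and> d_xm f x0 m0 \<noteq> 0 \<and>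
     d_xx f x0 m0 = 0 \<and> d_xxx f x0 m0 \<noteq> 0"

end

theory Submission
  imports Defs
begin

(* The hyperplane Omega = 1 consists of zeros of Omega' for every H and mu, so it is invariant
   and, being flat, tangent to the center eigenspace: it is the parametric center manifold at every
   point of the line of equilibria. On it H' = -(1 + mu/2) H = -(mu1/2) H. The reduced field
   c mu1 H is linear in H, so its second and third H-derivatives vanish identically and none of the
   Sotomayor conditions for a saddle-node, transcritical or pitchfork bifurcation can hold. *)

lemma friedmann_Omega_at_1: "friedmann_Omega 1 H mu = 0"
  by (simp add: friedmann_Omega_def)

lemma friedmann_H_at_1: "friedmann_H 1 H (mu1 - 2) = - (1/2) * mu1 * H"
  by (simp add: friedmann_H_def algebra_simps)

lemma friedmann_mu_eq_0: "friedmann_mu Om H mu = 0"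
  by (simp add: friedmann_mu_def)

lemma local_param_center_manifold_const:
  assumes "\<And>H mu. friedmann_Omega c H mu = 0"
  shows "local_param_center_manifold (\<lambda>_. c) c H0 mu0"
proof -
  have "frechet_derivative (\<lambda>_::real \<times> real. c) (at p) = (\<lambda>_. 0)" for p
    by (simp add: frechet_derivative_at[symmetric])
  then show ?thesis
    unfolding local_param_center_manifold_def
    using assms by (intro exI[of _ UNIV]) (auto intro!: exI[of _ "\<lambda>_. 0"])
qed

lemma d_x_bilinear: "d_x (\<lambda>x m. c * m * x) x m = c * m"
  unfolding d_x_def by (rule DERIV_imp_deriv) (auto intro!: derivative_eq_intros)

lemma d_m_bilinear: "d_m (\<lambda>x m. c * m * x) x m = c * x"
  unfolding d_m_def by (rule DERIV_imp_deriv) (auto intro!: derivative_eq_intros)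

lemma d_xx_bilinear: "d_xx (\<lambda>x m. c * m * x) x m = 0"
  unfolding d_xx_def d_x_bilinear by simp

lemma d_xxx_bilinear: "d_xxx (\<lambda>x m. c * m * x) x m = 0"
  unfolding d_xxx_def d_xx_bilinear by simp

lemma bilinear_no_local_bifurcation:
  "\<not> saddle_node_conditions (\<lambda>x m. c * m * x) x0 m0"
  "\<not> transcritical_conditions (\<lambda>x m. c * m * x) x0 m0"
  "\<not> pitchfork_conditions (\<lambda>x m. c * m * x) x0 m0"
  by (simp_all add: saddle_node_conditions_def transcritical_conditions_def
      pitchfork_conditions_def d_xx_bilinear d_xxx_bilinear)

theorem mainTheorem6:
  shows
    \<comment> \<open>line of equilibria (1, H, -2)\<close>
    "(\<forall>H. friedmann_Omega 1 H (-2) = 0 \<and> friedmann_H 1 H (-2) = 0 \<and> friedmann_mu 1 H (-2) = 0)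
   \<comment> \<open>(i) at (1,0,-2): center manifold Omega = 1; reduced dynamics in tau~ = 2 tau, mu1 = mu + 2\<close>
   \<and> local_param_center_manifold (\<lambda>_. 1) 1 0 (-2)
   \<and> (\<forall>H mu1. (1/2) * friedmann_H 1 H (mu1 - 2) = - (1/4) * mu1 * H
              \<and> friedmann_mu 1 H (mu1 - 2) = 0)
   \<comment> \<open>(ii) at (1,1,-2): center manifold Omega = 1; reduced dynamics in tau\<close>
   \<and> local_param_center_manifold (\<lambda>_. 1) 1 1 (-2)
   \<and> (\<forall>H mu1. friedmann_H 1 H (mu1 - 2) = - (1/2) * mu1 * H
              \<and> friedmann_mu 1 H (mu1 - 2) = 0)
   \<comment> \<open>f(H, mu1) = c mu1 H, c \<noteq> 0: transversality and nondegeneracy fail, no SN/TC/PF\<close>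
   \<and> (\<forall>c::real. c \<noteq> 0 \<longrightarrow>
        (let f = (\<lambda>H mu1. c * mu1 * H) in
           d_m f 0 0 = 0 \<and> (\<forall>H mu1. d_xx f H mu1 = 0) \<and>
           \<not> saddle_node_conditions f 0 0 \<and>
           \<not> transcritical_conditions f 0 0 \<and>
           \<not> pitchfork_conditions f 0 0))"
proof -
  have equilibria: "friedmann_H 1 H (-2) = 0" for H
    using friedmann_H_at_1[of H 0] by simp
  have center_manifold: "local_param_center_manifold (\<lambda>_. 1) 1 H0 (-2)" for H0
    by (rule local_param_center_manifold_const) (rule friedmann_Omega_at_1)
  show ?thesis
    by (simp add: Let_def friedmann_Omega_at_1 equilibria friedmann_mu_eq_0 center_manifold
        friedmann_H_at_1 d_m_bilinear d_xx_bilinear bilinear_no_local_bifurcation)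
qed

end
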